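(* Let $\nu>0$, $C_0,C_1>0$, and let $f_i:[0,1]\to[0,1]$, $i\in\mathbb N$, be orientation-preserving $C^{2+\nu}$ diffeomorphisms with $f_i(0)=0$, $f_i(1)=1$, $|n_{f_i}(x)-n_{f_i}(y)|\le C_0|x-y|^\nu$ for all $x,y\in[0,1]$, and $\sup_{[0,1]}|n_{f_i}|\le C_1$, for all $i$. Then for every $C_2>0$ there exists $C_3>0$ such that the following holds: for every $n$ and every choice of intervals $[a_i,b_i]\subset[0,1]$, $1\le i\le n$, with $\delta_i=b_i-a_i>0$ and $\sum_{i=1}^n\delta_i\le C_2$, $$d_{C^2}\big(\tilde f_1^n,M_1^n\big)\le C_3\big(\max_{1\le j\le n}\delta_j\big)^\nu,$$ where $\tilde f_i=\mathcal Z_{[a_i,b_i]}(f_i)$, $M_i=M_{N_{\tilde f_i}}$, $\tilde f_1^n=\tilde f_n\circ\cdots\circ\tilde f_1$ and $M_1^n=M_n\circ\cdots\circ M_1$.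
   Context: For a $C^2$ orientation-preserving diffeomorphism $g$ of an interval, its nonlinearity is $n_g=D^2g/Dg$; for $g$ defined on $[0,1]$, $N_g=\int_0^1 n_g(x)\,dx$. Zoom: for an interval $H$ and a diffeomorphism $g$ on $H$, $\mathcal Z_H(g)=A_1\circ g\circ A_2:[0,1]\to[0,1]$, where $A_2$ is the orientation-preserving affine map sending $[0,1]$ onto $H$ and $A_1$ the orientation-preserving affine map sending $g(H)$ onto $[0,1]$. For $N\in\mathbb R$, $M_N(x)=\dfrac{xe^{-N/2}}{1+x(e^{-N/2}-1)}$ on $[0,1]$. $d_{C^2}(f,g)=\sum_{i=0}^2\sup_{x\in[0,1]}|D^if(x)-D^ig(x)|$. *)

theory Defs
  imports "HOL-Analysis.Analysis"
begin

definition Dw :: "(real \<Rightarrow> real) \<Rightarrow> real \<Rightarrow> real" where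
  "Dw g x = (THE d. (g has_real_derivative d) (at x within {0..1}))"

definition C2_diffeo01 :: "(real \<Rightarrow> real) \<Rightarrow> bool" where
  "C2_diffeo01 g \<longleftrightarrow>
     (\<forall>x\<in>{0..1}. (g has_real_derivative Dw g x) (at x within {0..1})
                 \<and> (Dw g has_real_derivative Dw (Dw g) x) (at x within {0..1})
                 \<and> Dw g x > 0)
     \<and> continuous_on {0..1} (Dw (Dw g))
     \<and> g ` {0..1} = {0..1}"

definition C2nu_diffeo01 :: "real \<Rightarrow> (real \<Rightarrow> real) \<Rightarrow> bool" where
  "C2nu_diffeo01 \<nu> g \<longleftrightarrow> C2_diffeo01 g \<and>
     (\<exists>K. \<forall>x\<in>{0..1}. \<forall>y\<in>{0..1}. \<bar>Dw (Dw g) x - Dw (Dw g) y\<bar> \<le> K * \<bar>x - y\<bar> powr \<nu>)"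

definition nonlin :: "(real \<Rightarrow> real) \<Rightarrow> real \<Rightarrow> real" where
  "nonlin g x = Dw (Dw g) x / Dw g x"

definition Nint :: "(real \<Rightarrow> real) \<Rightarrow> real" where
  "Nint g = integral {0..1} (nonlin g)"

text \<open>Zoom of g on [a,b]: A1 o g o A2.\<close>
definition zoom :: "real \<Rightarrow> real \<Rightarrow> (real \<Rightarrow> real) \<Rightarrow> real \<Rightarrow> real" where
  "zoom a b g x = (g (a + x * (b - a)) - g a) / (g b - g a)"

definition Mob :: "real \<Rightarrow> real \<Rightarrow> real" where
  "Mob N x = x * exp (- N / 2) / (1 + x * (exp (- N / 2) - 1))"

fun comp_upto :: "(nat \<Rightarrow> real \<Rightarrow> real) \<Rightarrow> nat \<Rightarrow> real \<Rightarrow> real" where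
  "comp_upto F 0 = id"
| "comp_upto F (Suc k) = F (Suc k) \<circ> comp_upto F k"

definition dC2 :: "(real \<Rightarrow> real) \<Rightarrow> (real \<Rightarrow> real) \<Rightarrow> real" where
  "dC2 f g = (\<Sum>i<3. SUP x\<in>{0..1}. \<bar>(Dw ^^ i) f x - (Dw ^^ i) g x\<bar>)"

end

theory Submission
  imports Defs
begin

(* Write u_i for the zoomed maps and v_i = M_{N_i} for the Moebius maps,
   N_i = N_{u_i}; all maps considered fix 0 and 1 and have positive derivative
   ("normalized").  Everything is controlled through nonlinearities:
   (1) chain rule  n_{u o w} = (n_u o w) * Dw + n_w, so along a composition the
       nonlinearities add up, weighted by derivatives of the inner part;
   (2) two normalized maps whose nonlinearities differ by at most
       eta have log-derivatives, hence derivatives and values, differing by O(eta);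
   (3) if |n_{u_i} - N_i| and |n_{v_i} - N_i| are at most alpha_i and |N_i| <= beta_i,
       an induction over the composition bounds the distance of the nonlinearities of
       u_1^k and v_1^k by exp(K * sum beta) * 2E * sum alpha, and by (2) the
       C^2-distance of u_1^n and v_1^n by a constant times sum alpha;
   (4) for a zoom on an interval of length delta, n_{u_i} = delta * n_{f_i}(affine),
       so the Hoelder bound gives alpha_i <= const * delta_i * (max delta)^nu, while a
       Taylor estimate of the Moebius map gives |n_{M_N} - N| <= N^2 exp |N|.
   (For nu > 1 the Hoelder hypothesis forces n_{f_i} = 0, so this case is degenerate.)
   Summing alpha_i against sum delta_i <= C2 yields the theorem. *)

lemma Dw_eq:
  assumes "(g has_real_derivative d) (at x within {0..1})" "x \<in> {0..1}"
  shows "Dw g x = d"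
proof -
  have unique: "d' = d" if "(g has_real_derivative d') (at x within {0..1})" for d'
    using vector_derivative_unique_within_closed_interval[of 0 1 x g d' d] that assms
    by (simp add: has_real_derivative_iff_has_vector_derivative)
  show ?thesis unfolding Dw_def using assms(1) unique by (rule the_equality)
qed

lemma has_derivative_01_cong:
  assumes "(f has_real_derivative d) (at x within {0..1})" "x \<in> {0..1}"
    "\<And>y. y \<in> {0..1} \<Longrightarrow> f y = g y"
  shows "(g has_real_derivative d) (at x within {0..1})"
  using has_field_derivative_transform_within[OF assms(1) zero_less_one assms(2)] assms(3)
  by blast

lemma mvt_01:
  assumes "\<And>x. x \<in> {0..1} \<Longrightarrow> (g has_real_derivative g' x) (at x within {0..1})"
    "u \<in> {0..1}" "v \<in> {0..1}" "u < v"
  shows "\<exists>z. u < z \<and> z < v \<and> g v - g u = (v - u) * g' z"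
proof -
  have "continuous_on {0..1} g"
    using assms(1) by (meson DERIV_continuous continuous_on_eq_continuous_within)
  then have cont: "continuous_on {u..v} g"
    by (rule continuous_on_subset) (use assms(2,3) in auto)
  have deriv: "(g has_real_derivative g' x) (at x)" if "u < x" "x < v" for x
    using assms(1)[of x] assms(2,3) that at_within_Icc_at[of 0 x 1] by auto
  obtain l z where "u < z" "z < v" "(g has_real_derivative l) (at z)" "g v - g u = (v - u) * l"
    using MVT[OF assms(4) cont] deriv real_differentiable_def by blast
  moreover have "l = g' z" using deriv[of z] calculation DERIV_unique by blast
  ultimately show ?thesis by blast
qed

text \<open>This is the class closed under composition, zooming and
  containing the Moebius maps; no continuity of the second derivative is needed.\<close>
definition c2_normalized :: "(real \<Rightarrow> real) \<Rightarrow> bool" where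
  "c2_normalized g \<longleftrightarrow>
     (\<forall>x\<in>{0..1}. (g has_real_derivative Dw g x) (at x within {0..1})
        \<and> (Dw g has_real_derivative Dw (Dw g) x) (at x within {0..1}) \<and> Dw g x > 0)
     \<and> g 0 = 0 \<and> g 1 = 1"

lemma c2_normalizedD:
  assumes "c2_normalized g" "x \<in> {0..1}"
  shows "(g has_real_derivative Dw g x) (at x within {0..1})"
    "(Dw g has_real_derivative Dw (Dw g) x) (at x within {0..1})" "Dw g x > 0"
  using assms unfolding c2_normalized_def by auto

lemma c2_normalized_ends: "c2_normalized g \<Longrightarrow> g 0 = 0" "c2_normalized g \<Longrightarrow> g 1 = 1"
  unfolding c2_normalized_def by auto

lemma c2_normalized_strict_mono:
  assumes "c2_normalized g" "u \<in> {0..1}" "v \<in> {0..1}" "u < v"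
  shows "g u < g v"
proof -
  obtain z where "u < z" "z < v" "g v - g u = (v - u) * Dw g z"
    using mvt_01[of g "Dw g" u v] assms c2_normalizedD by blast
  moreover have "Dw g z > 0" using c2_normalizedD(3)[OF assms(1), of z] calculation assms by auto
  ultimately show ?thesis by (smt (verit) mult_pos_pos)
qed

lemma c2_normalized_range:
  assumes "c2_normalized g" "x \<in> {0..1}" shows "g x \<in> {0..1}"
proof -
  have "g 0 \<le> g x" using c2_normalized_strict_mono[OF assms(1), of 0 x] assms by (cases "x = 0") auto
  moreover have "g x \<le> g 1" using c2_normalized_strict_mono[OF assms(1), of x 1] assms by (cases "x = 1") auto
  ultimately show ?thesis using c2_normalized_ends[OF assms(1)] by auto
qed

text \<open>Two normalized maps have equal derivatives somewhere (Rolle for their difference).\<close>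
lemma c2_normalized_equal_slopes:
  assumes "c2_normalized u" "c2_normalized v"
  shows "\<exists>z\<in>{0..1}. Dw u z = Dw v z"
proof -
  have "((\<lambda>x. u x - v x) has_real_derivative Dw u x - Dw v x) (at x within {0..1})"
    if "x \<in> {0..1}" for x using that assms by (auto intro!: derivative_intros c2_normalizedD)
  then obtain z where "0 < z" "z < 1" "(u 1 - v 1) - (u 0 - v 0) = (1 - 0) * (Dw u z - Dw v z)"
    using mvt_01[of "\<lambda>x. u x - v x" "\<lambda>x. Dw u x - Dw v x" 0 1] by auto
  then show ?thesis using c2_normalized_ends[OF assms(1)] c2_normalized_ends[OF assms(2)]
    by (intro bexI[of _ z]) auto
qed

lemma c2_normalized_comp:
  assumes "c2_normalized u" "c2_normalized v"
  shows "c2_normalized (u \<circ> v)"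
    and "x \<in> {0..1} \<Longrightarrow> Dw (u \<circ> v) x = Dw u (v x) * Dw v x"
    and "x \<in> {0..1} \<Longrightarrow>
      Dw (Dw (u \<circ> v)) x = Dw (Dw u) (v x) * Dw v x * Dw v x + Dw u (v x) * Dw (Dw v) x"
proof -
  have sub: "v ` {0..1} \<subseteq> {0..1}" using c2_normalized_range[OF assms(2)] by auto
  have chain: "((F \<circ> v) has_real_derivative F' (v x) * Dw v x) (at x within {0..1})"
    if "x \<in> {0..1}" "\<And>y. y \<in> {0..1} \<Longrightarrow> (F has_real_derivative F' y) (at y within {0..1})"
    for x F F'
    using DERIV_image_chain[OF DERIV_subset[OF that(2)[OF c2_normalized_range[OF assms(2) that(1)]] sub]
        c2_normalizedD(1)[OF assms(2) that(1)]] .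
  have d1: "((u \<circ> v) has_real_derivative Dw u (v x) * Dw v x) (at x within {0..1})"
    if "x \<in> {0..1}" for x
    by (rule chain[OF that c2_normalizedD(1)[OF assms(1)]])
  have e1: "Dw (u \<circ> v) x = Dw u (v x) * Dw v x" if "x \<in> {0..1}" for x
    using Dw_eq[OF d1[OF that] that] .
  define D2 where "D2 x = Dw (Dw u) (v x) * Dw v x * Dw v x + Dw u (v x) * Dw (Dw v) x" for x
  have d2: "(Dw (u \<circ> v) has_real_derivative D2 x) (at x within {0..1})" if "x \<in> {0..1}" for x
  proof -
    have "((\<lambda>y. (Dw u \<circ> v) y * Dw v y) has_real_derivative D2 x) (at x within {0..1})"
      using DERIV_mult[OF chain[OF that c2_normalizedD(2)[OF assms(1)]] c2_normalizedD(2)[OF assms(2) that]]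
      by (simp add: D2_def algebra_simps)
    then show ?thesis by (rule has_derivative_01_cong[OF _ that]) (simp add: e1)
  qed
  have e2: "Dw (Dw (u \<circ> v)) x = D2 x" if "x \<in> {0..1}" for x using Dw_eq[OF d2[OF that] that] .
  show "Dw (Dw (u \<circ> v)) x = Dw (Dw u) (v x) * Dw v x * Dw v x + Dw u (v x) * Dw (Dw v) x"
    if "x \<in> {0..1}" using e2 that unfolding D2_def .
  show "Dw (u \<circ> v) x = Dw u (v x) * Dw v x" if "x \<in> {0..1}" using e1 that .
  show "c2_normalized (u \<circ> v)" unfolding c2_normalized_def
  proof (intro conjI ballI)
    fix x :: real assume x: "x \<in> {0..1}"
    show "((u \<circ> v) has_real_derivative Dw (u \<circ> v) x) (at x within {0..1})" using d1[OF x] e1[OF x] by simp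
    show "(Dw (u \<circ> v) has_real_derivative Dw (Dw (u \<circ> v)) x) (at x within {0..1})" using d2[OF x] e2[OF x] by simp
    show "Dw (u \<circ> v) x > 0"
      using e1[OF x] c2_normalizedD(3)[OF assms(1) c2_normalized_range[OF assms(2) x]]
        c2_normalizedD(3)[OF assms(2) x] by simp
  qed (use c2_normalized_ends[OF assms(1)] c2_normalized_ends[OF assms(2)] in auto)
qed

lemma nonlin_comp:
  assumes "c2_normalized u" "c2_normalized v" "x \<in> {0..1}"
  shows "nonlin (u \<circ> v) x = nonlin u (v x) * Dw v x + nonlin v x"
  using c2_normalized_comp(2,3)[OF assms] c2_normalizedD(3)[OF assms(1) c2_normalized_range[OF assms(2,3)]]
    c2_normalizedD(3)[OF assms(2,3)]
  unfolding nonlin_def by (simp add: field_simps)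

lemma c2_normalized_id: "c2_normalized id"
  and Dw_id: "x \<in> {0..1} \<Longrightarrow> Dw id x = 1"
  and nonlin_id: "x \<in> {0..1} \<Longrightarrow> nonlin id x = 0"
proof -
  have e: "Dw id x = 1" if "x \<in> {0..1}" for x
    by (rule Dw_eq[OF _ that]) (simp add: DERIV_ident[THEN DERIV_subset] id_def)
  have d: "(Dw id has_real_derivative 0) (at x within {0..1})" if "x \<in> {0..1}" for x
    by (rule has_derivative_01_cong[of "\<lambda>_. 1", OF _ that]) (auto simp: e)
  have e2: "Dw (Dw id) x = 0" if "x \<in> {0..1}" for x using Dw_eq[OF d[OF that] that] .
  show "Dw id x = 1" if "x \<in> {0..1}" using e that .
  show "nonlin id x = 0" if "x \<in> {0..1}" using e2 that by (simp add: nonlin_def)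
  show "c2_normalized id" unfolding c2_normalized_def
    using e e2 d by (auto simp: id_def DERIV_ident[THEN DERIV_subset])
qed

text \<open>n_u - n_v is the derivative of ln Du - ln Dv, which vanishes somewhere; so close
  nonlinearities force close log-derivatives.\<close>
lemma ln_Dw_diff_bound:
  assumes "c2_normalized u" "c2_normalized v"
    "\<And>x. x \<in> {0..1} \<Longrightarrow> \<bar>nonlin u x - nonlin v x\<bar> \<le> \<eta>" "x \<in> {0..1}"
  shows "\<bar>ln (Dw u x) - ln (Dw v x)\<bar> \<le> \<eta>"
proof -
  obtain z where z: "z \<in> {0..1}" "Dw u z = Dw v z" using c2_normalized_equal_slopes[OF assms(1,2)] by blast
  have d: "((\<lambda>y. ln (Dw u y) - ln (Dw v y)) has_real_derivative nonlin u y - nonlin v y)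
      (at y within {0..1})" if "y \<in> {0..1}" for y
  proof -
    have pos: "Dw u y > 0" "Dw v y > 0" using c2_normalizedD(3) assms(1,2) that by auto
    show ?thesis unfolding nonlin_def
      by (rule derivative_eq_intros c2_normalizedD[OF assms(1) that] c2_normalizedD[OF assms(2) that]
          | use pos in simp)+
  qed
  have "norm ((ln (Dw u x) - ln (Dw v x)) - (ln (Dw u z) - ln (Dw v z))) \<le> \<eta> * norm (x - z)"
    by (rule field_differentiable_bound[OF convex_real_interval(5) d _ assms(4) z(1)])
      (use assms(3) in auto)
  moreover have "norm (x - z) \<le> 1" using assms(4) z(1) by auto
  moreover have "\<eta> \<ge> 0" using assms(3)[of 0] by auto
  ultimately show ?thesis using z(2) by simp (smt (verit) mult_left_le)
qed

text \<open>A bound S on |n_h| pins Dh between exp(-S) and exp S (compare h with id).\<close>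
lemma Dw_bounds:
  assumes "c2_normalized h" "\<And>x. x \<in> {0..1} \<Longrightarrow> \<bar>nonlin h x\<bar> \<le> S" "x \<in> {0..1}"
  shows "exp (-S) \<le> Dw h x" "Dw h x \<le> exp S"
proof -
  have "\<bar>ln (Dw h x) - ln (Dw id x)\<bar> \<le> S"
    by (rule ln_Dw_diff_bound[OF assms(1) c2_normalized_id _ assms(3)]) (simp add: nonlin_id assms(2))
  then have l: "\<bar>ln (Dw h x)\<bar> \<le> S" using Dw_id[OF assms(3)] by simp
  have p: "Dw h x > 0" using c2_normalizedD(3)[OF assms(1,3)] .
  have "exp (-S) \<le> exp (ln (Dw h x))" "exp (ln (Dw h x)) \<le> exp S" using l by simp_all
  then show "exp (-S) \<le> Dw h x" "Dw h x \<le> exp S" using p by simp_all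
qed

lemma exp_minus_one_bound: "\<bar>exp (y::real) - 1\<bar> \<le> \<bar>y\<bar> * exp \<bar>y\<bar>"
proof -
  have "norm (exp y - exp 0) \<le> exp \<bar>y\<bar> * norm (y - 0)"
    by (rule field_differentiable_bound[of "{-\<bar>y\<bar>..\<bar>y\<bar>}" exp exp])
      (auto intro!: DERIV_exp[THEN DERIV_subset])
  then show ?thesis by (simp add: mult.commute)
qed

lemma exp_taylor1_bound: "\<bar>exp (y::real) - 1 - y\<bar> \<le> y\<^sup>2 * exp \<bar>y\<bar>"
proof -
  have b: "\<bar>exp z - 1\<bar> \<le> \<bar>y\<bar> * exp \<bar>y\<bar>" if "z \<in> {-\<bar>y\<bar>..\<bar>y\<bar>}" for z
  proof -
    have "\<bar>exp z - 1\<bar> \<le> \<bar>z\<bar> * exp \<bar>z\<bar>" by (rule exp_minus_one_bound)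
    also have "\<dots> \<le> \<bar>y\<bar> * exp \<bar>y\<bar>" using that by (intro mult_mono) auto
    finally show ?thesis .
  qed
  have "norm ((exp y - 1 - y) - (exp 0 - 1 - 0)) \<le> (\<bar>y\<bar> * exp \<bar>y\<bar>) * norm (y - 0)"
    by (rule field_differentiable_bound[of "{-\<bar>y\<bar>..\<bar>y\<bar>}" "\<lambda>z. exp z - 1 - z" "\<lambda>z. exp z - 1"])
      (auto intro!: derivative_eq_intros b)
  then show ?thesis by (simp add: power2_eq_square algebra_simps abs_mult)
qed

lemma C1_close_of_nonlin_close:
  assumes "c2_normalized u" "c2_normalized v" "\<And>x. x \<in> {0..1} \<Longrightarrow> \<bar>nonlin v x\<bar> \<le> S"
    "\<And>x. x \<in> {0..1} \<Longrightarrow> \<bar>nonlin u x - nonlin v x\<bar> \<le> \<eta>" "\<eta> \<le> H"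
  shows "\<And>x. x \<in> {0..1} \<Longrightarrow> \<bar>Dw u x - Dw v x\<bar> \<le> exp S * exp H * \<eta>"
    and "\<And>x. x \<in> {0..1} \<Longrightarrow> \<bar>u x - v x\<bar> \<le> exp S * exp H * \<eta>"
proof -
  have eta: "\<eta> \<ge> 0" using assms(4)[of 0] by auto
  have D: "\<bar>Dw u x - Dw v x\<bar> \<le> exp S * exp H * \<eta>" if x: "x \<in> {0..1}" for x
  proof -
    define p where "p = ln (Dw u x) - ln (Dw v x)"
    have pb: "\<bar>p\<bar> \<le> \<eta>" unfolding p_def by (rule ln_Dw_diff_bound[OF assms(1,2) assms(4) x])
    have pos: "Dw u x > 0" "Dw v x > 0" using c2_normalizedD(3) assms(1,2) x by auto
    have "Dw u x = Dw v x * exp p" unfolding p_def using pos by (simp add: exp_diff)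
    then have "Dw u x - Dw v x = Dw v x * (exp p - 1)" by (simp add: algebra_simps)
    then have "\<bar>Dw u x - Dw v x\<bar> = Dw v x * \<bar>exp p - 1\<bar>" using pos by (simp add: abs_mult)
    also have "\<dots> \<le> exp S * (\<eta> * exp H)"
    proof (rule mult_mono)
      show "Dw v x \<le> exp S" by (rule Dw_bounds(2)[OF assms(2,3) x])
      have "\<bar>exp p - 1\<bar> \<le> \<bar>p\<bar> * exp \<bar>p\<bar>" by (rule exp_minus_one_bound)
      also have "\<dots> \<le> \<eta> * exp H" using pb assms(5) by (intro mult_mono) auto
      finally show "\<bar>exp p - 1\<bar> \<le> \<eta> * exp H" .
    qed (use eta in auto)
    finally show ?thesis by (simp add: algebra_simps)
  qed
  show "\<bar>Dw u x - Dw v x\<bar> \<le> exp S * exp H * \<eta>" if "x \<in> {0..1}" for x using D that .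
  show "\<bar>u x - v x\<bar> \<le> exp S * exp H * \<eta>" if x: "x \<in> {0..1}" for x
  proof -
    have "norm ((u x - v x) - (u 0 - v 0)) \<le> (exp S * exp H * \<eta>) * norm (x - 0)"
      by (rule field_differentiable_bound[OF convex_real_interval(5),
            where f="\<lambda>y. u y - v y" and f'="\<lambda>y. Dw u y - Dw v y"])
        (use x D in \<open>auto intro!: derivative_intros c2_normalizedD assms(1,2)\<close>)
    moreover have "exp S * exp H * \<eta> * norm (x - 0) \<le> exp S * exp H * \<eta>"
      using x eta by (intro mult_left_le) auto
    moreover have "norm ((u x - v x) - (u 0 - v 0)) = \<bar>u x - v x\<bar>"
      using c2_normalized_ends[OF assms(1)] c2_normalized_ends[OF assms(2)] by simp
    ultimately show ?thesis by linarith
  qed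
qed

lemma comp_step_bounds:
  assumes "c2_normalized w" "c2_normalized G" "\<And>y. y \<in> {0..1} \<Longrightarrow> \<bar>nonlin w y\<bar> \<le> g"
    "Dw G x \<le> D" "x \<in> {0..1}"
  shows "Dw (w \<circ> G) x \<le> exp g * D" "\<bar>nonlin (w \<circ> G) x\<bar> \<le> g * D + \<bar>nonlin G x\<bar>"
proof -
  have Gx: "G x \<in> {0..1}" by (rule c2_normalized_range[OF assms(2,5)])
  have pos: "Dw G x > 0" "Dw w (G x) > 0"
    using c2_normalizedD(3)[OF assms(2,5)] c2_normalizedD(3)[OF assms(1) Gx] by auto
  have "Dw (w \<circ> G) x = Dw w (G x) * Dw G x" by (rule c2_normalized_comp(2)[OF assms(1,2,5)])
  also have "\<dots> \<le> exp g * D"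
    using Dw_bounds(2)[OF assms(1,3) Gx] assms(4) pos by (intro mult_mono) auto
  finally show "Dw (w \<circ> G) x \<le> exp g * D" .
  have "\<bar>nonlin w (G x) * Dw G x\<bar> = \<bar>nonlin w (G x)\<bar> * Dw G x" using pos by (simp add: abs_mult)
  also have "\<dots> \<le> g * D" using assms(3)[OF Gx] assms(4) pos by (intro mult_mono) auto
  finally show "\<bar>nonlin (w \<circ> G) x\<bar> \<le> g * D + \<bar>nonlin G x\<bar>"
    using nonlin_comp[OF assms(1,2,5)] by linarith
qed

lemma comp_upto_bounds:
  assumes cu: "\<And>i. i \<in> {1..n} \<Longrightarrow> c2_normalized (u i)"
    and bu: "\<And>i x. i \<in> {1..n} \<Longrightarrow> x \<in> {0..1} \<Longrightarrow> \<bar>nonlin (u i) x\<bar> \<le> \<gamma> i"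
    and sP: "(\<Sum>i=1..n. \<gamma> i) \<le> P" and k: "k \<le> n"
  shows "c2_normalized (comp_upto u k)"
    and "\<And>x. x \<in> {0..1} \<Longrightarrow> Dw (comp_upto u k) x \<le> exp P"
    and "\<And>x. x \<in> {0..1} \<Longrightarrow> \<bar>nonlin (comp_upto u k) x\<bar> \<le> exp P * P"
proof -
  have g0: "\<gamma> i \<ge> 0" if "i \<in> {1..n}" for i using bu[OF that, of 0] by auto
  have partial: "(\<Sum>i=1..j. \<gamma> i) \<le> P" "0 \<le> (\<Sum>i=1..j. \<gamma> i)" if "j \<le> n" for j
  proof -
    have "(\<Sum>i=1..j. \<gamma> i) \<le> (\<Sum>i=1..n. \<gamma> i)" by (rule sum_mono2) (use that g0 in auto)
    then show "(\<Sum>i=1..j. \<gamma> i) \<le> P" using sP by linarith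
    show "0 \<le> (\<Sum>i=1..j. \<gamma> i)" using that g0 by (intro sum_nonneg) auto
  qed
  have "c2_normalized (comp_upto u k) \<and> (\<forall>x\<in>{0..1}. Dw (comp_upto u k) x \<le> exp (\<Sum>i=1..k. \<gamma> i)
      \<and> \<bar>nonlin (comp_upto u k) x\<bar> \<le> exp P * (\<Sum>i=1..k. \<gamma> i))"
    using k
  proof (induction k)
    case 0
    then show ?case using c2_normalized_id Dw_id nonlin_id by (simp add: id_def)
  next
    case (Suc k)
    have sk: "Suc k \<in> {1..n}" using Suc.prems by auto
    define G where "G = comp_upto u k"
    have IH: "c2_normalized G" "\<And>x. x \<in> {0..1} \<Longrightarrow> Dw G x \<le> exp (\<Sum>i=1..k. \<gamma> i)"
      "\<And>x. x \<in> {0..1} \<Longrightarrow> \<bar>nonlin G x\<bar> \<le> exp P * (\<Sum>i=1..k. \<gamma> i)"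
      using Suc G_def by auto
    have eq: "comp_upto u (Suc k) = u (Suc k) \<circ> G" by (simp add: G_def)
    have sum: "(\<Sum>i=1..Suc k. \<gamma> i) = \<gamma> (Suc k) + (\<Sum>i=1..k. \<gamma> i)" by simp
    have "exp (\<Sum>i=1..k. \<gamma> i) \<le> exp P" using partial(1) Suc.prems by simp
    from mult_left_mono[OF this g0[OF sk]]
    have weight: "\<gamma> (Suc k) * exp (\<Sum>i=1..k. \<gamma> i) \<le> exp P * \<gamma> (Suc k)"
      by (simp only: mult.commute)
    have D: "Dw (comp_upto u (Suc k)) x \<le> exp (\<Sum>i=1..Suc k. \<gamma> i)"
      and n: "\<bar>nonlin (comp_upto u (Suc k)) x\<bar> \<le> exp P * (\<Sum>i=1..Suc k. \<gamma> i)"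
      if x: "x \<in> {0..1}" for x
    proof -
      note step = comp_step_bounds[OF cu[OF sk] IH(1) bu[OF sk] IH(2)[OF x] x]
      show "Dw (comp_upto u (Suc k)) x \<le> exp (\<Sum>i=1..Suc k. \<gamma> i)"
        using step(1) unfolding eq sum exp_add .
      show "\<bar>nonlin (comp_upto u (Suc k)) x\<bar> \<le> exp P * (\<Sum>i=1..Suc k. \<gamma> i)"
        using step(2) IH(3)[OF x] weight unfolding eq sum distrib_left by linarith
    qed
    show ?case using c2_normalized_comp(1)[OF cu[OF sk] IH(1)] D n unfolding eq by blast
  qed
  then have ck: "c2_normalized (comp_upto u k)"
    and Dk: "\<And>x. x \<in> {0..1} \<Longrightarrow> Dw (comp_upto u k) x \<le> exp (\<Sum>i=1..k. \<gamma> i)"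
    and nk: "\<And>x. x \<in> {0..1} \<Longrightarrow> \<bar>nonlin (comp_upto u k) x\<bar> \<le> exp P * (\<Sum>i=1..k. \<gamma> i)"
    by blast+
  have bnd: "exp (\<Sum>i=1..k. \<gamma> i) \<le> exp P" "exp P * (\<Sum>i=1..k. \<gamma> i) \<le> exp P * P"
    using partial(1)[OF k] by simp_all
  show "c2_normalized (comp_upto u k)" by (rule ck)
  show "Dw (comp_upto u k) x \<le> exp P" if "x \<in> {0..1}" for x
    using order_trans[OF Dk[OF that] bnd(1)] .
  show "\<bar>nonlin (comp_upto u k) x\<bar> \<le> exp P * P" if "x \<in> {0..1}" for x
    using order_trans[OF nk[OF that] bnd(2)] .
qed

lemma dC2_le:
  assumes "\<And>x. x \<in> {0..1} \<Longrightarrow> \<bar>f x - g x\<bar> \<le> c0"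
    "\<And>x. x \<in> {0..1} \<Longrightarrow> \<bar>Dw f x - Dw g x\<bar> \<le> c1"
    "\<And>x. x \<in> {0..1} \<Longrightarrow> \<bar>Dw (Dw f) x - Dw (Dw g) x\<bar> \<le> c2"
  shows "dC2 f g \<le> c0 + c1 + c2"
proof -
  have sup: "(SUP x\<in>{0..1}. h x) \<le> c" if "\<And>x. x \<in> {0..1::real} \<Longrightarrow> h x \<le> (c::real)" for h c
    by (rule cSUP_least) (use that in auto)
  have "dC2 f g = (SUP x\<in>{0..1}. \<bar>f x - g x\<bar>) + (SUP x\<in>{0..1}. \<bar>Dw f x - Dw g x\<bar>)
      + (SUP x\<in>{0..1}. \<bar>Dw (Dw f) x - Dw (Dw g) x\<bar>)"
    by (simp add: dC2_def numeral_3_eq_3 lessThan_Suc)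
  then show ?thesis
    using sup[of "\<lambda>x. \<bar>f x - g x\<bar>", OF assms(1)] sup[of "\<lambda>x. \<bar>Dw f x - Dw g x\<bar>", OF assms(2)]
      sup[of "\<lambda>x. \<bar>Dw (Dw f) x - Dw (Dw g) x\<bar>", OF assms(3)] by linarith
qed

definition comparison_const :: "real \<Rightarrow> real \<Rightarrow> real" where
  "comparison_const A B = (let P = A + B; E = exp P; K = exp (E * P) * exp (2 * E * P)
     in (2 * K + E + E * P * K) * exp (K * B) * (2 * E))"

lemma comparison_const_nonneg: "A \<ge> 0 \<Longrightarrow> B \<ge> 0 \<Longrightarrow> comparison_const A B \<ge> 0"
  unfolding comparison_const_def Let_def by (intro mult_nonneg_nonneg add_nonneg_nonneg) auto

locale nonlin_comparison =
  fixes n :: nat and u v :: "nat \<Rightarrow> real \<Rightarrow> real" and N \<alpha> \<beta> :: "nat \<Rightarrow> real" and A B :: real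
  assumes cu: "\<And>i. i \<in> {1..n} \<Longrightarrow> c2_normalized (u i)"
    and cv: "\<And>i. i \<in> {1..n} \<Longrightarrow> c2_normalized (v i)"
    and au: "\<And>i x. i \<in> {1..n} \<Longrightarrow> x \<in> {0..1} \<Longrightarrow> \<bar>nonlin (u i) x - N i\<bar> \<le> \<alpha> i"
    and av: "\<And>i x. i \<in> {1..n} \<Longrightarrow> x \<in> {0..1} \<Longrightarrow> \<bar>nonlin (v i) x - N i\<bar> \<le> \<alpha> i"
    and bN: "\<And>i. i \<in> {1..n} \<Longrightarrow> \<bar>N i\<bar> \<le> \<beta> i"
    and sA: "(\<Sum>i=1..n. \<alpha> i) \<le> A" and sB: "(\<Sum>i=1..n. \<beta> i) \<le> B"
begin

text \<open>Total nonlinearity budget, derivative bound of partial compositions, and the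
  Lipschitz factor of step (2) in this setting.\<close>
definition "Pt = A + B"
definition "Em = exp Pt"
definition "Kd = exp (Em * Pt) * exp (2 * Em * Pt)"

text \<open>Bound on the distance of the nonlinearities of u_1^k and v_1^k.\<close>
definition "gap k = exp (Kd * (\<Sum>i=1..k. \<beta> i)) * (2 * Em * (\<Sum>i=1..k. \<alpha> i))"

lemma alpha_nonneg: "i \<in> {1..n} \<Longrightarrow> \<alpha> i \<ge> 0"
  using au[of i 0] by auto

lemma beta_nonneg: "i \<in> {1..n} \<Longrightarrow> \<beta> i \<ge> 0"
  using bN[of i] by auto

lemma Pt_nonneg: "Pt \<ge> 0"
proof -
  have "0 \<le> (\<Sum>i=1..n. \<alpha> i)" "0 \<le> (\<Sum>i=1..n. \<beta> i)"
    using alpha_nonneg beta_nonneg by (auto intro: sum_nonneg)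
  then show ?thesis using sA sB unfolding Pt_def by linarith
qed

lemma Em_ge_1: "Em \<ge> 1" and Kd_ge_1: "Kd \<ge> 1"
  using Pt_nonneg unfolding Em_def Kd_def by (auto simp: mult_ge1_I)

text \<open>Both sequences have nonlinearities bounded by alpha_i + beta_i, so their partial
  compositions obey the uniform bounds of comp_upto_bounds.\<close>
lemma partial_bounds:
  assumes "w \<in> {u, v}" "k \<le> n"
  shows "c2_normalized (comp_upto w k)"
    and "\<And>x. x \<in> {0..1} \<Longrightarrow> Dw (comp_upto w k) x \<le> Em"
    and "\<And>x. x \<in> {0..1} \<Longrightarrow> \<bar>nonlin (comp_upto w k) x\<bar> \<le> Em * Pt"
proof -
  have cw: "c2_normalized (w i)" if "i \<in> {1..n}" for i using assms(1) cu[OF that] cv[OF that] by auto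
  have bw: "\<bar>nonlin (w i) x\<bar> \<le> \<alpha> i + \<beta> i" if "i \<in> {1..n}" "x \<in> {0..1}" for i x
  proof -
    have "\<bar>nonlin (w i) x - N i\<bar> \<le> \<alpha> i" using assms(1) au[OF that] av[OF that] by auto
    then show ?thesis using bN[OF that(1)] by linarith
  qed
  have "(\<Sum>i=1..n. \<alpha> i + \<beta> i) \<le> Pt" using sA sB unfolding Pt_def sum.distrib by linarith
  from comp_upto_bounds[of n w "\<lambda>i. \<alpha> i + \<beta> i", OF cw bw this assms(2)]
  show "c2_normalized (comp_upto w k)"
    and "\<And>x. x \<in> {0..1} \<Longrightarrow> Dw (comp_upto w k) x \<le> Em"
    and "\<And>x. x \<in> {0..1} \<Longrightarrow> \<bar>nonlin (comp_upto w k) x\<bar> \<le> Em * Pt"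
    unfolding Em_def by blast+
qed

lemma C1_gap:
  assumes "k \<le> n" "\<And>x. x \<in> {0..1} \<Longrightarrow> \<bar>nonlin (comp_upto u k) x - nonlin (comp_upto v k) x\<bar> \<le> r"
    "x \<in> {0..1}"
  shows "\<bar>Dw (comp_upto u k) x - Dw (comp_upto v k) x\<bar> \<le> Kd * r"
    and "\<bar>comp_upto u k x - comp_upto v k x\<bar> \<le> Kd * r"
proof -
  have "u \<in> {u, v}" "v \<in> {u, v}" by auto
  note U = partial_bounds[OF this(1) assms(1)] and V = partial_bounds[OF this(2) assms(1)]
  have gap: "\<bar>nonlin (comp_upto u k) y - nonlin (comp_upto v k) y\<bar> \<le> min r (2 * Em * Pt)"
    if "y \<in> {0..1}" for y
    using assms(2)[OF that] U(3)[OF that] V(3)[OF that] by auto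
  have "exp (Em * Pt) * exp (2 * Em * Pt) * min r (2 * Em * Pt) \<le> Kd * r"
    using Kd_ge_1 unfolding Kd_def by (intro mult_left_mono) auto
  then show "\<bar>Dw (comp_upto u k) x - Dw (comp_upto v k) x\<bar> \<le> Kd * r"
    and "\<bar>comp_upto u k x - comp_upto v k x\<bar> \<le> Kd * r"
    using C1_close_of_nonlin_close[OF U(1) V(1) V(3) gap _ assms(3), of "2 * Em * Pt"]
    by (meson min.cobounded2 order_trans)+
qed

lemma nonlin_gap_step:
  assumes "k < n" "\<And>x. x \<in> {0..1} \<Longrightarrow> \<bar>nonlin (comp_upto u k) x - nonlin (comp_upto v k) x\<bar> \<le> r"
    and x: "x \<in> {0..1}"
  shows "\<bar>nonlin (comp_upto u (Suc k)) x - nonlin (comp_upto v (Suc k)) x\<bar>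
           \<le> r * (1 + Kd * \<beta> (Suc k)) + 2 * Em * \<alpha> (Suc k)"
proof -
  have k: "k \<le> n" and sk: "Suc k \<in> {1..n}" using assms(1) by auto
  define G where "G = comp_upto u k"
  define H where "H = comp_upto v k"
  have cG: "c2_normalized G" "Dw G x \<le> Em" "Dw G x > 0"
    using partial_bounds[of u k] k x c2_normalizedD(3) unfolding G_def by auto
  have cH: "c2_normalized H" "Dw H x \<le> Em" "Dw H x > 0"
    using partial_bounds[of v k] k x c2_normalizedD(3) unfolding H_def by auto
  have Gx: "G x \<in> {0..1}" and Hx: "H x \<in> {0..1}"
    using c2_normalized_range cG(1) cH(1) x by auto
  have "nonlin (comp_upto u (Suc k)) x - nonlin (comp_upto v (Suc k)) x
      = (nonlin (u (Suc k)) (G x) - N (Suc k)) * Dw G x + N (Suc k) * (Dw G x - Dw H x)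
        - (nonlin (v (Suc k)) (H x) - N (Suc k)) * Dw H x + (nonlin G x - nonlin H x)"
    using nonlin_comp[OF cu[OF sk] cG(1) x] nonlin_comp[OF cv[OF sk] cH(1) x]
    by (simp add: G_def H_def algebra_simps)
  also have "\<bar>\<dots>\<bar> \<le> \<alpha> (Suc k) * Em + \<beta> (Suc k) * (Kd * r) + \<alpha> (Suc k) * Em + r"
  proof -
    have t1: "\<bar>(nonlin (u (Suc k)) (G x) - N (Suc k)) * Dw G x\<bar> \<le> \<alpha> (Suc k) * Em"
      unfolding abs_mult using au[OF sk Gx] cG alpha_nonneg[OF sk] by (intro mult_mono) auto
    have t2: "\<bar>N (Suc k) * (Dw G x - Dw H x)\<bar> \<le> \<beta> (Suc k) * (Kd * r)"
      unfolding abs_mult using bN[OF sk] C1_gap(1)[OF k assms(2) x] beta_nonneg[OF sk]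
      by (intro mult_mono) (auto simp: G_def H_def)
    have t3: "\<bar>(nonlin (v (Suc k)) (H x) - N (Suc k)) * Dw H x\<bar> \<le> \<alpha> (Suc k) * Em"
      unfolding abs_mult using av[OF sk Hx] cH alpha_nonneg[OF sk] by (intro mult_mono) auto
    show ?thesis using t1 t2 t3 assms(2)[OF x] unfolding G_def H_def by linarith
  qed
  also have "\<dots> = r * (1 + Kd * \<beta> (Suc k)) + 2 * Em * \<alpha> (Suc k)" by (simp add: algebra_simps)
  finally show ?thesis .
qed

text \<open>The closed form gap solves the recursion of the inductive step (1 + t <= exp t).\<close>
lemma gap_step:
  assumes "k < n"
  shows "gap k * (1 + Kd * \<beta> (Suc k)) + 2 * Em * \<alpha> (Suc k) \<le> gap (Suc k)"
proof -
  have sk: "Suc k \<in> {1..n}" using assms by auto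
  define sb where "sb = (\<Sum>i=1..k. \<beta> i)"
  define sa where "sa = (\<Sum>i=1..k. \<alpha> i)"
  have sa0: "sa \<ge> 0" and sb0: "sb \<ge> 0"
    unfolding sa_def sb_def using assms alpha_nonneg beta_nonneg by (auto intro!: sum_nonneg)
  have b0: "\<beta> (Suc k) \<ge> 0" and a0: "\<alpha> (Suc k) \<ge> 0"
    using alpha_nonneg[OF sk] beta_nonneg[OF sk] by auto
  have gk: "gap k = exp (Kd * sb) * (2 * Em * sa)" unfolding gap_def sb_def sa_def ..
  have gSk: "gap (Suc k) = exp (Kd * sb) * exp (Kd * \<beta> (Suc k)) * (2 * Em * sa)
       + exp (Kd * sb + Kd * \<beta> (Suc k)) * (2 * Em * \<alpha> (Suc k))"
    unfolding gap_def sb_def sa_def by (simp add: algebra_simps exp_add)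
  have "1 + Kd * \<beta> (Suc k) \<le> exp (Kd * \<beta> (Suc k))"
    by (rule exp_ge_add_one_self_aux) (use Kd_ge_1 b0 in simp)
  moreover have "gap k \<ge> 0" unfolding gk using sa0 Em_ge_1 by simp
  ultimately have "gap k * (1 + Kd * \<beta> (Suc k)) \<le> gap k * exp (Kd * \<beta> (Suc k))"
    by (intro mult_left_mono)
  also have "\<dots> = exp (Kd * sb) * exp (Kd * \<beta> (Suc k)) * (2 * Em * sa)" unfolding gk by simp
  finally have "gap k * (1 + Kd * \<beta> (Suc k)) \<le> \<dots>" .
  moreover have "1 * (2 * Em * \<alpha> (Suc k)) \<le> exp (Kd * sb + Kd * \<beta> (Suc k)) * (2 * Em * \<alpha> (Suc k))"
    using Kd_ge_1 sb0 b0 a0 Em_ge_1 by (intro mult_right_mono) auto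
  ultimately show ?thesis unfolding gSk by linarith
qed

lemma nonlin_gap:
  "k \<le> n \<Longrightarrow> x \<in> {0..1} \<Longrightarrow> \<bar>nonlin (comp_upto u k) x - nonlin (comp_upto v k) x\<bar> \<le> gap k"
proof (induction k arbitrary: x)
  case 0
  then show ?case by (simp add: gap_def)
next
  case (Suc k)
  then have k: "k < n" by simp
  have "\<bar>nonlin (comp_upto u (Suc k)) x - nonlin (comp_upto v (Suc k)) x\<bar>
      \<le> gap k * (1 + Kd * \<beta> (Suc k)) + 2 * Em * \<alpha> (Suc k)"
    by (rule nonlin_gap_step[OF k]) (use Suc k in auto)
  also have "\<dots> \<le> gap (Suc k)" by (rule gap_step[OF k])
  finally show ?case .
qed

theorem dC2_comp_upto:
  "dC2 (comp_upto u n) (comp_upto v n) \<le> comparison_const A B * (\<Sum>i=1..n. \<alpha> i)"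
proof -
  define G where "G = comp_upto u n"
  define H where "H = comp_upto v n"
  have "u \<in> {u, v}" "v \<in> {u, v}" by auto
  note U = partial_bounds[OF this(1) order_refl, folded G_def]
    and V = partial_bounds[OF this(2) order_refl, folded H_def]
  have gapn: "\<And>x. x \<in> {0..1} \<Longrightarrow> \<bar>nonlin G x - nonlin H x\<bar> \<le> gap n"
    using nonlin_gap[of n] unfolding G_def H_def by auto
  have gap0: "gap n \<ge> 0" using gapn[of 0] by auto
  have D2: "\<bar>Dw (Dw G) x - Dw (Dw H) x\<bar> \<le> (Em + Em * Pt * Kd) * gap n" if x: "x \<in> {0..1}" for x
  proof -
    have pos: "Dw G x > 0" "Dw H x > 0" using c2_normalizedD(3) U(1) V(1) x by auto
    have "Dw (Dw G) x - Dw (Dw H) x = (nonlin G x - nonlin H x) * Dw G x + nonlin H x * (Dw G x - Dw H x)"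
      using pos unfolding nonlin_def by (simp add: field_simps)
    also have "\<bar>\<dots>\<bar> \<le> gap n * Em + (Em * Pt) * (Kd * gap n)"
    proof -
      have "\<bar>(nonlin G x - nonlin H x) * Dw G x\<bar> \<le> gap n * Em"
        unfolding abs_mult using gapn[OF x] U(2)[OF x] pos gap0 by (intro mult_mono) auto
      moreover have "\<bar>nonlin H x * (Dw G x - Dw H x)\<bar> \<le> (Em * Pt) * (Kd * gap n)"
        unfolding abs_mult using V(3)[OF x] C1_gap(1)[OF order_refl gapn[unfolded G_def H_def] x]
          Em_ge_1 Pt_nonneg by (intro mult_mono) (auto simp: G_def H_def)
      ultimately show ?thesis by linarith
    qed
    finally show ?thesis by (simp add: algebra_simps)
  qed
  have "dC2 G H \<le> Kd * gap n + Kd * gap n + (Em + Em * Pt * Kd) * gap n"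
    by (rule dC2_le) (use D2 C1_gap[OF order_refl gapn[unfolded G_def H_def]] in \<open>auto simp: G_def H_def\<close>)
  also have "\<dots> = (2 * Kd + Em + Em * Pt * Kd) * gap n" by (simp add: algebra_simps)
  also have "\<dots> \<le> (2 * Kd + Em + Em * Pt * Kd) * (exp (Kd * B) * (2 * Em) * (\<Sum>i=1..n. \<alpha> i))"
  proof (rule mult_left_mono)
    have "0 \<le> (\<Sum>i=1..n. \<alpha> i)" using alpha_nonneg by (intro sum_nonneg) auto
    moreover have "exp (Kd * (\<Sum>i=1..n. \<beta> i)) \<le> exp (Kd * B)" using sB Kd_ge_1 by simp
    ultimately show "gap n \<le> exp (Kd * B) * (2 * Em) * (\<Sum>i=1..n. \<alpha> i)"
      unfolding gap_def using Em_ge_1 by (simp add: mult_right_mono mult.assoc)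
    show "0 \<le> 2 * Kd + Em + Em * Pt * Kd" using Kd_ge_1 Em_ge_1 Pt_nonneg by simp
  qed
  also have "\<dots> = comparison_const A B * (\<Sum>i=1..n. \<alpha> i)"
    by (simp add: comparison_const_def Let_def Kd_def Em_def Pt_def)
  finally show ?thesis unfolding G_def H_def .
qed

end

lemma integral_01_between:
  fixes h :: "real \<Rightarrow> real"
  assumes "continuous_on {0..1} h" "\<And>y. y \<in> {0..1::real} \<Longrightarrow> lo \<le> h y \<and> h y \<le> hi"
  shows "lo \<le> integral {0..1} h \<and> integral {0..1} h \<le> hi"
proof -
  have i: "h integrable_on {0..1}" by (rule integrable_continuous_interval[OF assms(1)])
  have c: "(\<lambda>x. c) integrable_on {0..1::real}" for c :: real
    using integrable_const[of c 0 "1::real"] by simp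
  show ?thesis
    using integral_le[OF c[of lo] i] integral_le[OF i c[of hi]] assms(2) by auto
qed

lemma affine_01_in_01:
  fixes a b x :: real
  assumes "0 \<le> a" "a < b" "b \<le> 1" "x \<in> {0..1}"
  shows "a + x * (b - a) \<in> {0..1}"
proof -
  have "0 \<le> x" "0 \<le> b - a" using assms by auto
  then have "0 \<le> x * (b - a)" by (rule mult_nonneg_nonneg)
  moreover have "x * (b - a) \<le> b - a" using assms by (intro mult_left_le_one_le) auto
  ultimately have "0 \<le> a + x * (b - a)" "a + x * (b - a) \<le> 1" using assms by linarith+
  then show ?thesis by simp
qed

lemma zoom_c2_normalized:
  assumes cg: "c2_normalized g" and ab: "0 \<le> a" "a < b" "b \<le> 1"
  shows "c2_normalized (zoom a b g)"
    and "\<And>x. x \<in> {0..1} \<Longrightarrow> nonlin (zoom a b g) x = (b - a) * nonlin g (a + x * (b - a))"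
proof -
  define d where "d = b - a"
  define K where "K = g b - g a"
  have d0: "d > 0" using ab d_def by simp
  have K0: "K > 0" unfolding K_def using c2_normalized_strict_mono[OF cg, of a b] ab by auto
  have Ain: "a + x * d \<in> {0..1}" if "x \<in> {0..1}" for x
    using affine_01_in_01[OF ab that] unfolding d_def .
  have sub: "(\<lambda>x. a + x * d) ` {0..1} \<subseteq> {0..1}" using Ain by auto
  have dA: "((\<lambda>x. a + x * d) has_real_derivative d) (at x within {0..1})" for x
    by (auto intro!: derivative_eq_intros)
  have chain: "((\<lambda>x. F (a + x * d)) has_real_derivative F' (a + x * d) * d) (at x within {0..1})"
    if "x \<in> {0..1}" "\<And>y. y \<in> {0..1} \<Longrightarrow> (F has_real_derivative F' y) (at y within {0..1})" for x F F'
    using DERIV_image_chain[OF DERIV_subset[OF that(2)[OF Ain[OF that(1)]] sub] dA] by (simp add: o_def)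
  have z: "zoom a b g = (\<lambda>x. (g (a + x * d) - g a) / K)"
    unfolding d_def K_def by (rule ext) (simp add: zoom_def)
  have d1: "(zoom a b g has_real_derivative Dw g (a + x * d) * d / K) (at x within {0..1})"
    if "x \<in> {0..1}" for x
    unfolding z using chain[OF that c2_normalizedD(1)[OF cg]] K0 by (auto intro!: derivative_eq_intros)
  have e1: "Dw (zoom a b g) x = Dw g (a + x * d) * d / K" if "x \<in> {0..1}" for x
    by (rule Dw_eq[OF d1[OF that] that])
  have d2: "(Dw (zoom a b g) has_real_derivative Dw (Dw g) (a + x * d) * d * d / K) (at x within {0..1})"
    if "x \<in> {0..1}" for x
  proof (rule has_derivative_01_cong[OF _ that])
    show "((\<lambda>x. Dw g (a + x * d) * d / K) has_real_derivative Dw (Dw g) (a + x * d) * d * d / K)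
        (at x within {0..1})"
      using chain[OF that c2_normalizedD(2)[OF cg]] K0 by (auto intro!: derivative_eq_intros)
  qed (simp add: e1)
  have e2: "Dw (Dw (zoom a b g)) x = Dw (Dw g) (a + x * d) * d * d / K" if "x \<in> {0..1}" for x
    by (rule Dw_eq[OF d2[OF that] that])
  show "c2_normalized (zoom a b g)" unfolding c2_normalized_def
  proof (intro conjI ballI)
    fix x :: real assume x: "x \<in> {0..1}"
    show "(zoom a b g has_real_derivative Dw (zoom a b g) x) (at x within {0..1})" using d1[OF x] e1[OF x] by simp
    show "(Dw (zoom a b g) has_real_derivative Dw (Dw (zoom a b g)) x) (at x within {0..1})"
      using d2[OF x] e2[OF x] by simp
    show "Dw (zoom a b g) x > 0" using e1[OF x] c2_normalizedD(3)[OF cg Ain[OF x]] d0 K0 by simp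
  qed (use K0 in \<open>simp_all add: zoom_def K_def\<close>)
  show "nonlin (zoom a b g) x = (b - a) * nonlin g (a + x * (b - a))" if "x \<in> {0..1}" for x
    using c2_normalizedD(3)[OF cg Ain[OF that]] d0 K0
    unfolding nonlin_def e1[OF that] e2[OF that] d_def[symmetric]
    by (simp add: field_simps)
qed

lemma holder_gt1_constant:
  fixes h :: "real \<Rightarrow> real"
  assumes nu: "\<nu> > 1"
    and H: "\<And>x y. x \<in> {0..1} \<Longrightarrow> y \<in> {0..1} \<Longrightarrow> \<bar>h x - h y\<bar> \<le> K * \<bar>x - y\<bar> powr \<nu>"
  shows "\<exists>c. \<forall>x\<in>{0..1}. h x = c"
proof (rule has_field_derivative_zero_constant[OF convex_real_interval(5)])
  fix x :: real assume x: "x \<in> {0..1}"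
  show "(h has_real_derivative 0) (at x within {0..1})"
    unfolding has_field_derivative_iff
  proof (rule Lim_null_comparison)
    show "\<forall>\<^sub>F y in at x within {0..1}. norm ((h y - h x) / (y - x)) \<le> K * \<bar>y - x\<bar> powr (\<nu> - 1)"
      unfolding eventually_at_filter
    proof (intro always_eventually allI impI)
      fix y assume y: "y \<noteq> x" "y \<in> {0..1}"
      have p: "\<bar>y - x\<bar> > 0" using y by simp
      have "norm ((h y - h x) / (y - x)) = \<bar>h y - h x\<bar> / \<bar>y - x\<bar>" by (simp add: abs_divide)
      also have "\<dots> \<le> K * \<bar>y - x\<bar> powr \<nu> / \<bar>y - x\<bar>"
        using H[OF y(2) x] p by (intro divide_right_mono) auto
      also have "\<dots> = K * \<bar>y - x\<bar> powr (\<nu> - 1)" using p by (simp add: powr_diff)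
      finally show "norm ((h y - h x) / (y - x)) \<le> K * \<bar>y - x\<bar> powr (\<nu> - 1)" .
    qed
    have "((\<lambda>y. \<bar>y - x\<bar>) \<longlongrightarrow> \<bar>x - x\<bar>) (at x within {0..1})" by (intro tendsto_intros)
    then have "((\<lambda>y. \<bar>y - x\<bar>) \<longlongrightarrow> 0) (at x within {0..1})" by simp
    then have "((\<lambda>y. \<bar>y - x\<bar> powr (\<nu> - 1)) \<longlongrightarrow> 0) (at x within {0..1})"
      by (rule tendsto_zero_powrI[OF _ tendsto_const]) (use nu in auto)
    then show "((\<lambda>y. K * \<bar>y - x\<bar> powr (\<nu> - 1)) \<longlongrightarrow> 0) (at x within {0..1})"
      using tendsto_mult_right_zero by blast
  qed
qed

lemma C2nu_diffeo01_normalized: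
  assumes "C2nu_diffeo01 \<nu> g" "g 0 = 0" "g 1 = 1"
  shows "c2_normalized g" "continuous_on {0..1} (nonlin g)"
proof -
  have C: "C2_diffeo01 g" using assms(1) unfolding C2nu_diffeo01_def by auto
  then show "c2_normalized g" using assms(2,3) unfolding C2_diffeo01_def c2_normalized_def by auto
  have c1: "continuous_on {0..1} (Dw g)"
    using C unfolding C2_diffeo01_def continuous_on_eq_continuous_within
    by (meson DERIV_continuous)
  have "continuous_on {0..1} (\<lambda>x. Dw (Dw g) x / Dw g x)"
    by (rule continuous_on_divide[OF _ c1]) (use C in \<open>auto simp: C2_diffeo01_def\<close>)
  then show "continuous_on {0..1} (nonlin g)" unfolding nonlin_def[abs_def] .
qed

text \<open>For nu > 1 the hypotheses force n_g = 0: D^2 g and n_g are both constant, so Dg is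
  constant and D^2 g vanishes.\<close>
lemma nonlin_zero_if_holder_gt1:
  assumes nu: "\<nu> > 1" and g: "C2nu_diffeo01 \<nu> g" "g 0 = 0" "g 1 = 1"
    and H: "\<And>x y. x \<in> {0..1} \<Longrightarrow> y \<in> {0..1} \<Longrightarrow> \<bar>nonlin g x - nonlin g y\<bar> \<le> C * \<bar>x - y\<bar> powr \<nu>"
    and x: "x \<in> {0..1}"
  shows "nonlin g x = 0"
proof -
  have cg: "c2_normalized g" using C2nu_diffeo01_normalized[OF g] by simp
  obtain K where K: "\<And>x y. x \<in> {0..1} \<Longrightarrow> y \<in> {0..1} \<Longrightarrow>
      \<bar>Dw (Dw g) x - Dw (Dw g) y\<bar> \<le> K * \<bar>x - y\<bar> powr \<nu>"
    using g(1) unfolding C2nu_diffeo01_def by blast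
  obtain k where k: "\<And>x. x \<in> {0..1} \<Longrightarrow> Dw (Dw g) x = k" using holder_gt1_constant[OF nu K] by blast
  obtain c where c: "\<And>x. x \<in> {0..1} \<Longrightarrow> nonlin g x = c" using holder_gt1_constant[OF nu H] by blast
  have "c = 0"
  proof (rule ccontr)
    assume "c \<noteq> 0"
    then have D: "Dw g y = k / c" if "y \<in> {0..1}" for y
      using c[OF that] k[OF that] c2_normalizedD(3)[OF cg that] unfolding nonlin_def by (auto simp: field_simps)
    have "(Dw g has_real_derivative 0) (at 0 within {0..1})"
      by (rule has_derivative_01_cong[of "\<lambda>_. k / c"]) (auto simp: D)
    then have "k = 0" using Dw_eq[of "Dw g" 0 0] k[of 0] by simp
    then show False using D[of 0] c2_normalizedD(3)[OF cg, of 0] by simp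
  qed
  then show ?thesis using c[OF x] by simp
qed

lemma Mob_denominator:
  fixes N :: real
  assumes "x \<in> {0..1}"
  shows "exp (- \<bar>N\<bar> / 2) \<le> 1 + x * (exp (- N / 2) - 1)"
proof -
  have "exp (- \<bar>N\<bar> / 2) \<le> 1" "exp (- \<bar>N\<bar> / 2) \<le> exp (- N / 2)" by auto
  then have "(1 - x) * exp (- \<bar>N\<bar> / 2) + x * exp (- \<bar>N\<bar> / 2) \<le> (1 - x) * 1 + x * exp (- N / 2)"
    using assms by (intro add_mono mult_left_mono) auto
  then show ?thesis by (simp add: algebra_simps)
qed

lemma Mob_c2_normalized:
  shows "c2_normalized (Mob N)"
    and "\<And>x. x \<in> {0..1} \<Longrightarrow>
           nonlin (Mob N) x = - 2 * (exp (- N / 2) - 1) / (1 + x * (exp (- N / 2) - 1))"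
proof -
  define c where "c = exp (- N / 2)"
  define t where "t = c - 1"
  have mob: "Mob N = (\<lambda>x. x * c / (1 + x * t))" unfolding Mob_def c_def t_def by (rule ext) simp
  have c0: "c > 0" unfolding c_def by simp
  have den0: "1 + x * t > 0" if "x \<in> {0..1}" for x
    using Mob_denominator[OF that, of N] exp_gt_zero[of "- \<bar>N\<bar> / 2"] unfolding t_def c_def by linarith
  have d1: "(Mob N has_real_derivative c / (1 + x * t)\<^sup>2) (at x within {0..1})" if "x \<in> {0..1}" for x
  proof -
    have "((\<lambda>x. x * c / (1 + x * t)) has_real_derivative c / (1 + x * t)\<^sup>2) (at x)"
      using den0[OF that] by (auto intro!: derivative_eq_intros simp: field_simps power2_eq_square)
    then show ?thesis unfolding mob by (rule has_field_derivative_at_within)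
  qed
  have e1: "Dw (Mob N) x = c / (1 + x * t)\<^sup>2" if "x \<in> {0..1}" for x by (rule Dw_eq[OF d1[OF that] that])
  have d2: "(Dw (Mob N) has_real_derivative - 2 * c * t / (1 + x * t) ^ 3) (at x within {0..1})"
    if "x \<in> {0..1}" for x
  proof -
    have dp: "1 + x * t \<noteq> 0" using den0[OF that] by simp
    have "((\<lambda>x. (1 + x * t)\<^sup>2) has_real_derivative 2 * (1 + x * t) * t) (at x)"
      by (auto intro!: derivative_eq_intros)
    from DERIV_quotient[OF DERIV_const this]
    have "((\<lambda>x. c / (1 + x * t)\<^sup>2) has_real_derivative
        (0 * (1 + x * t)\<^sup>2 - 2 * (1 + x * t) * t * c) / (((1 + x * t)\<^sup>2) ^ Suc (Suc 0))) (at x)"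
      using dp by simp
    moreover have alg: "(0 * D\<^sup>2 - 2 * D * t * c) / ((D\<^sup>2) ^ Suc (Suc 0)) = - 2 * c * t / D ^ 3"
      if "D \<noteq> 0" for D :: real
      using that by (simp add: field_simps power2_eq_square power3_eq_cube)
    ultimately have "((\<lambda>x. c / (1 + x * t)\<^sup>2) has_real_derivative - 2 * c * t / (1 + x * t) ^ 3) (at x)"
      using alg[OF dp] by simp
    then show ?thesis
      by (rule has_derivative_01_cong[OF has_field_derivative_at_within that]) (simp add: e1)
  qed
  have e2: "Dw (Dw (Mob N)) x = - 2 * c * t / (1 + x * t) ^ 3" if "x \<in> {0..1}" for x
    by (rule Dw_eq[OF d2[OF that] that])
  show "c2_normalized (Mob N)" unfolding c2_normalized_def
  proof (intro conjI ballI)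
    fix x :: real assume x: "x \<in> {0..1}"
    show "(Mob N has_real_derivative Dw (Mob N) x) (at x within {0..1})" using d1[OF x] e1[OF x] by simp
    show "(Dw (Mob N) has_real_derivative Dw (Dw (Mob N)) x) (at x within {0..1})"
      using d2[OF x] e2[OF x] by simp
    show "Dw (Mob N) x > 0" using e1[OF x] den0[OF x] c0 by simp
  qed (use c0 in \<open>simp_all add: mob t_def\<close>)
  show "nonlin (Mob N) x = - 2 * (exp (- N / 2) - 1) / (1 + x * (exp (- N / 2) - 1))"
    if x: "x \<in> {0..1}" for x
  proof -
    have "(- 2 * c * t / D ^ 3) / (c / D\<^sup>2) = - 2 * t / D" if "D \<noteq> 0" for D :: real
      using that c0 by (simp add: field_simps power2_eq_square power3_eq_cube)
    then show ?thesis unfolding nonlin_def e1[OF x] e2[OF x] using den0[OF x] by (simp add: t_def c_def)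
  qed
qed

text \<open>Second-order Taylor estimate: the nonlinearity of M_N is N up to N^2 exp |N|.\<close>
lemma Mob_nonlin_close:
  assumes x: "x \<in> {0..1}"
  shows "\<bar>nonlin (Mob N) x - N\<bar> \<le> N\<^sup>2 * exp \<bar>N\<bar>"
proof -
  define y where "y = - N / 2"
  define t where "t = exp y - 1"
  have den: "exp (- \<bar>N\<bar> / 2) \<le> 1 + x * t" using Mob_denominator[OF x] unfolding t_def y_def .
  then have dp: "1 + x * t > 0" by (smt (verit) exp_gt_zero)
  have eq: "nonlin (Mob N) x - N = (- 2 * (t - y) + 2 * y * x * t) / (1 + x * t)"
    unfolding Mob_c2_normalized(2)[OF x] t_def[symmetric, unfolded y_def] using dp
    by (simp add: field_simps y_def)
  have tb: "\<bar>t\<bar> \<le> \<bar>y\<bar> * exp \<bar>y\<bar>" unfolding t_def by (rule exp_minus_one_bound)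
  have tyb: "\<bar>t - y\<bar> \<le> y\<^sup>2 * exp \<bar>y\<bar>" unfolding t_def by (rule exp_taylor1_bound)
  have "\<bar>2 * y * x * t\<bar> = 2 * \<bar>y\<bar> * \<bar>t\<bar> * x" using x by (simp add: abs_mult)
  also have "\<dots> \<le> 2 * \<bar>y\<bar> * \<bar>t\<bar>" by (rule mult_left_le) (use x in auto)
  also have "\<dots> \<le> 2 * \<bar>y\<bar> * (\<bar>y\<bar> * exp \<bar>y\<bar>)" using tb by (intro mult_left_mono) auto
  also have "\<dots> = 2 * (y\<^sup>2 * exp \<bar>y\<bar>)" by (simp add: power2_eq_square)
  finally have "\<bar>2 * y * x * t\<bar> \<le> 2 * (y\<^sup>2 * exp \<bar>y\<bar>)" .
  moreover have "\<bar>- 2 * (t - y)\<bar> = 2 * \<bar>t - y\<bar>" by (simp add: abs_if)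
  ultimately have "\<bar>- 2 * (t - y) + 2 * y * x * t\<bar> \<le> 4 * y\<^sup>2 * exp \<bar>y\<bar>"
    using tyb abs_triangle_ineq[of "- 2 * (t - y)" "2 * y * x * t"] by linarith
  also have "\<dots> = N\<^sup>2 * exp (\<bar>N\<bar> / 2)" unfolding y_def by (simp add: power2_eq_square abs_divide)
  finally have num: "\<bar>- 2 * (t - y) + 2 * y * x * t\<bar> \<le> N\<^sup>2 * exp (\<bar>N\<bar> / 2)" .
  have "\<bar>nonlin (Mob N) x - N\<bar> = \<bar>- 2 * (t - y) + 2 * y * x * t\<bar> / (1 + x * t)"
    unfolding eq using dp by (simp add: abs_divide)
  also have "\<dots> \<le> N\<^sup>2 * exp (\<bar>N\<bar> / 2) / exp (- \<bar>N\<bar> / 2)"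
    using num den by (intro frac_le) auto
  also have "\<dots> = N\<^sup>2 * exp \<bar>N\<bar>" by (simp add: exp_diff[symmetric] exp_minus field_simps flip: exp_add)
  finally show ?thesis .
qed

lemma zoom_nonlin_estimates:
  assumes nu: "\<nu> > 0" and C0: "C0 \<ge> 0"
    and g: "C2nu_diffeo01 \<nu> g" "g 0 = 0" "g 1 = 1"
    and H: "\<And>x y. x \<in> {0..1} \<Longrightarrow> y \<in> {0..1} \<Longrightarrow> \<bar>nonlin g x - nonlin g y\<bar> \<le> C0 * \<bar>x - y\<bar> powr \<nu>"
    and bnd: "\<And>x. x \<in> {0..1} \<Longrightarrow> \<bar>nonlin g x\<bar> \<le> C1"
    and ab: "0 \<le> a" "a < b" "b \<le> 1"
  shows "c2_normalized (zoom a b g)"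
    and "\<bar>Nint (zoom a b g)\<bar> \<le> C1 * (b - a)"
    and "\<And>x. x \<in> {0..1} \<Longrightarrow>
           \<bar>nonlin (zoom a b g) x - Nint (zoom a b g)\<bar> \<le> C0 * (b - a) * (b - a) powr \<nu>"
proof -
  define d where "d = b - a"
  have d: "0 < d" "d \<le> 1" using ab d_def by auto
  note cg = C2nu_diffeo01_normalized[OF g]
  note nz = zoom_c2_normalized(2)[OF cg(1) ab, folded d_def]
  note Ain = affine_01_in_01[OF ab, folded d_def]
  show "c2_normalized (zoom a b g)" by (rule zoom_c2_normalized(1)[OF cg(1) ab])
  have "continuous_on {0..1} (\<lambda>x. d * nonlin g (a + x * d))"
    by (intro continuous_intros continuous_on_compose2[OF cg(2)]) (use Ain in auto)
  then have cont: "continuous_on {0..1} (nonlin (zoom a b g))"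
    using continuous_on_cong[OF refl, of "{0..1}" "nonlin (zoom a b g)"] nz by simp
  have nb: "\<bar>nonlin (zoom a b g) x\<bar> \<le> C1 * d" if "x \<in> {0..1}" for x
  proof -
    have "\<bar>nonlin (zoom a b g) x\<bar> = d * \<bar>nonlin g (a + x * d)\<bar>" using nz[OF that] d by (simp add: abs_mult)
    also have "\<dots> \<le> d * C1" using bnd[OF Ain[OF that]] d by (intro mult_left_mono) auto
    finally show ?thesis by (simp add: mult.commute)
  qed
  have hb: "\<bar>nonlin (zoom a b g) x - nonlin (zoom a b g) y\<bar> \<le> C0 * d * d powr \<nu>"
    if x: "x \<in> {0..1}" and y: "y \<in> {0..1}" for x y
  proof -
    have "\<bar>(a + x * d) - (a + y * d)\<bar> = \<bar>x - y\<bar> * d" using d by (simp add: abs_mult left_diff_distrib[symmetric])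
    also have "\<dots> \<le> 1 * d" using x y d by (intro mult_right_mono) auto
    finally have "\<bar>(a + x * d) - (a + y * d)\<bar> powr \<nu> \<le> d powr \<nu>" using nu by (intro powr_mono2) auto
    then have "\<bar>nonlin g (a + x * d) - nonlin g (a + y * d)\<bar> \<le> C0 * d powr \<nu>"
      using H[OF Ain[OF x] Ain[OF y]] C0 by (meson mult_left_mono order_trans)
    then have "d * \<bar>nonlin g (a + x * d) - nonlin g (a + y * d)\<bar> \<le> d * (C0 * d powr \<nu>)"
      using d by (intro mult_left_mono) auto
    moreover have "nonlin (zoom a b g) x - nonlin (zoom a b g) y
        = d * (nonlin g (a + x * d) - nonlin g (a + y * d))"
      using nz[OF x] nz[OF y] by (simp add: right_diff_distrib)
    ultimately show ?thesis using d by (simp add: abs_mult mult.assoc)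
  qed
  show "\<bar>Nint (zoom a b g)\<bar> \<le> C1 * (b - a)"
    using integral_01_between[OF cont, of "- (C1 * d)" "C1 * d"] nb unfolding Nint_def d_def
    by (force simp: abs_le_iff)
  show "\<bar>nonlin (zoom a b g) x - Nint (zoom a b g)\<bar> \<le> C0 * (b - a) * (b - a) powr \<nu>"
    if x: "x \<in> {0..1}" for x
  proof -
    have "nonlin (zoom a b g) x - C0 * d * d powr \<nu> \<le> Nint (zoom a b g)
        \<and> Nint (zoom a b g) \<le> nonlin (zoom a b g) x + C0 * d * d powr \<nu>"
      unfolding Nint_def by (rule integral_01_between[OF cont]) (use hb[OF x] in \<open>force simp: abs_le_iff\<close>)
    then show ?thesis unfolding d_def by (simp add: abs_le_iff)
  qed
qed

text \<open>N^2 <= C1^2 (b - a) m^nu whenever b - a <= m <= 1.  For nu <= 1 this is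
  (b - a) <= m^nu; for nu > 1 the nonlinearity vanishes identically.\<close>
lemma Nint_zoom_square_bound:
  assumes nu: "\<nu> > 0" and C0: "C0 \<ge> 0"
    and g: "C2nu_diffeo01 \<nu> g" "g 0 = 0" "g 1 = 1"
    and H: "\<And>x y. x \<in> {0..1} \<Longrightarrow> y \<in> {0..1} \<Longrightarrow> \<bar>nonlin g x - nonlin g y\<bar> \<le> C0 * \<bar>x - y\<bar> powr \<nu>"
    and bnd: "\<And>x. x \<in> {0..1} \<Longrightarrow> \<bar>nonlin g x\<bar> \<le> C1"
    and ab: "0 \<le> a" "a < b" "b \<le> 1" and m: "b - a \<le> m" "m \<le> 1"
  shows "(Nint (zoom a b g))\<^sup>2 \<le> C1\<^sup>2 * (b - a) * m powr \<nu>"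
proof (cases "\<nu> > 1")
  case True
  have "nonlin (zoom a b g) x = 0" if "x \<in> {0..1}" for x
    using zoom_c2_normalized(2)[OF C2nu_diffeo01_normalized(1)[OF g] ab that]
      nonlin_zero_if_holder_gt1[OF True g H affine_01_in_01[OF ab that]] by simp
  then have "Nint (zoom a b g) = integral {0..1} (\<lambda>_. 0 :: real)"
    unfolding Nint_def by (subst integral_cong[of _ _ "\<lambda>_. 0"]) auto
  then have "Nint (zoom a b g) = 0" by simp
  then show ?thesis using ab by simp
next
  case False
  have "m \<le> m powr \<nu>" using powr_mono'[of \<nu> 1 m] False m ab by simp
  then have mn: "b - a \<le> m powr \<nu>" using m by linarith
  have "\<bar>Nint (zoom a b g)\<bar> \<le> C1 * (b - a)" by (rule zoom_nonlin_estimates(2)[OF nu C0 g H bnd ab])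
  then have "(Nint (zoom a b g))\<^sup>2 \<le> (C1 * (b - a))\<^sup>2" using power_mono[of _ _ 2] by force
  also have "\<dots> = C1\<^sup>2 * (b - a) * (b - a)" by (simp add: power2_eq_square)
  also have "\<dots> \<le> C1\<^sup>2 * (b - a) * m powr \<nu>" using mn ab by (intro mult_left_mono) auto
  finally show ?thesis .
qed

definition zoom_const :: "real \<Rightarrow> real \<Rightarrow> real" where
  "zoom_const C0 C1 = C0 + exp C1 * C1\<^sup>2"

lemma zoom_step_estimates:
  assumes nu: "\<nu> > 0" and C0: "C0 \<ge> 0"
    and g: "C2nu_diffeo01 \<nu> g" "g 0 = 0" "g 1 = 1"
    and H: "\<And>x y. x \<in> {0..1} \<Longrightarrow> y \<in> {0..1} \<Longrightarrow> \<bar>nonlin g x - nonlin g y\<bar> \<le> C0 * \<bar>x - y\<bar> powr \<nu>"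
    and bnd: "\<And>x. x \<in> {0..1} \<Longrightarrow> \<bar>nonlin g x\<bar> \<le> C1"
    and ab: "0 \<le> a" "a < b" "b \<le> 1" and m: "b - a \<le> m" "m \<le> 1"
  defines "N \<equiv> Nint (zoom a b g)"
  shows "c2_normalized (zoom a b g)" "c2_normalized (Mob N)" "\<bar>N\<bar> \<le> C1 * (b - a)"
    and "\<And>x. x \<in> {0..1} \<Longrightarrow> \<bar>nonlin (zoom a b g) x - N\<bar> \<le> zoom_const C0 C1 * (b - a) * m powr \<nu>"
    and "\<And>x. x \<in> {0..1} \<Longrightarrow> \<bar>nonlin (Mob N) x - N\<bar> \<le> zoom_const C0 C1 * (b - a) * m powr \<nu>"
proof -
  have C1: "C1 \<ge> 0" using bnd[of 0] by auto
  have rest: "0 \<le> exp C1 * C1\<^sup>2 * (b - a) * m powr \<nu>" "0 \<le> C0 * (b - a) * m powr \<nu>"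
    using ab C0 by auto
  have split: "zoom_const C0 C1 * (b - a) * m powr \<nu> = C0 * (b - a) * m powr \<nu> + exp C1 * C1\<^sup>2 * (b - a) * m powr \<nu>"
    unfolding zoom_const_def by (simp add: algebra_simps)
  show "c2_normalized (zoom a b g)" "c2_normalized (Mob N)" "\<bar>N\<bar> \<le> C1 * (b - a)"
    using zoom_nonlin_estimates(1,2)[OF nu C0 g H bnd ab] Mob_c2_normalized(1) unfolding N_def by auto
  show "\<bar>nonlin (zoom a b g) x - N\<bar> \<le> zoom_const C0 C1 * (b - a) * m powr \<nu>" if "x \<in> {0..1}" for x
  proof -
    have "(b - a) powr \<nu> \<le> m powr \<nu>" using ab m nu by (intro powr_mono2) auto
    then have "C0 * (b - a) * (b - a) powr \<nu> \<le> C0 * (b - a) * m powr \<nu>"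
      using C0 ab by (intro mult_left_mono) auto
    then show ?thesis using zoom_nonlin_estimates(3)[OF nu C0 g H bnd ab that] rest(1) split
      unfolding N_def by linarith
  qed
  show "\<bar>nonlin (Mob N) x - N\<bar> \<le> zoom_const C0 C1 * (b - a) * m powr \<nu>" if "x \<in> {0..1}" for x
  proof -
    have "\<bar>N\<bar> \<le> C1 * (b - a)" using zoom_nonlin_estimates(2)[OF nu C0 g H bnd ab] unfolding N_def .
    then have "\<bar>N\<bar> \<le> C1" using C1 ab by (smt (verit) mult_left_le)
    then have "N\<^sup>2 * exp \<bar>N\<bar> \<le> N\<^sup>2 * exp C1" by (intro mult_left_mono) auto
    also have "\<dots> \<le> C1\<^sup>2 * (b - a) * m powr \<nu> * exp C1"
      using Nint_zoom_square_bound[OF nu C0 g H bnd ab m] unfolding N_def by (intro mult_right_mono) auto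
    also have "\<dots> = exp C1 * C1\<^sup>2 * (b - a) * m powr \<nu>" by (simp add: mult_ac)
    finally show ?thesis using Mob_nonlin_close[OF that, of N] rest(2) split by linarith
  qed
qed

lemma interval_mesh:
  fixes n :: nat and a b :: "nat \<Rightarrow> real"
  assumes "n \<ge> 1" "\<forall>i\<in>{1..n}. 0 \<le> a i \<and> a i < b i \<and> b i \<le> 1"
  defines "m \<equiv> Max ((\<lambda>j. b j - a j) ` {1..n})"
  shows "\<And>i. i \<in> {1..n} \<Longrightarrow> b i - a i \<le> m" and "0 < m" and "m \<le> 1"
proof -
  show "b i - a i \<le> m" if "i \<in> {1..n}" for i unfolding m_def using that by (intro Max_ge finite_imageI) auto
  have "(\<lambda>j. b j - a j) ` {1..n} \<noteq> {}" using assms(1) by auto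
  then obtain j where j: "j \<in> {1..n}" "m = b j - a j"
    using Max_in[OF finite_imageI[OF finite_atLeastAtMost]] unfolding m_def by blast
  have "0 \<le> a j \<and> a j < b j \<and> b j \<le> 1" using assms(2) j(1) by blast
  then show "0 < m" "m \<le> 1" using j(2) by auto
qed

text \<open>Step (3) applies to the zoomed maps and their Moebius models: with mesh m and
  delta_i = b_i - a_i one may take alpha_i = zoom_const C0 C1 * delta_i * m^nu and
  beta_i = C1 * delta_i, whose sums are bounded in terms of C2 = bound on sum delta_i.\<close>
lemma zoomed_nonlin_comparison:
  fixes f :: "nat \<Rightarrow> real \<Rightarrow> real" and a b :: "nat \<Rightarrow> real"
  assumes nu: "\<nu> > 0" and C0: "C0 \<ge> 0"
    and fC: "\<And>i. i \<ge> 1 \<Longrightarrow> C2nu_diffeo01 \<nu> (f i)"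
    and fe: "\<And>i. i \<ge> 1 \<Longrightarrow> f i 0 = 0 \<and> f i 1 = 1"
    and fH: "\<And>i x y. i \<ge> 1 \<Longrightarrow> x \<in> {0..1} \<Longrightarrow> y \<in> {0..1} \<Longrightarrow>
           \<bar>nonlin (f i) x - nonlin (f i) y\<bar> \<le> C0 * \<bar>x - y\<bar> powr \<nu>"
    and fB: "\<And>i x. i \<ge> 1 \<Longrightarrow> x \<in> {0..1} \<Longrightarrow> \<bar>nonlin (f i) x\<bar> \<le> C1"
    and ab: "\<forall>i\<in>{1..n}. 0 \<le> a i \<and> a i < b i \<and> b i \<le> 1" and sd: "(\<Sum>i=1..n. b i - a i) \<le> C2"
    and m: "\<And>i. i \<in> {1..n} \<Longrightarrow> b i - a i \<le> m" "0 < m" "m \<le> 1"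
  shows "nonlin_comparison n (\<lambda>i. zoom (a i) (b i) (f i)) (\<lambda>i. Mob (Nint (zoom (a i) (b i) (f i))))
      (\<lambda>i. Nint (zoom (a i) (b i) (f i))) (\<lambda>i. zoom_const C0 C1 * (b i - a i) * m powr \<nu>)
      (\<lambda>i. C1 * (b i - a i)) (zoom_const C0 C1 * C2) (C1 * C2)"
proof -
  define Ca where "Ca = zoom_const C0 C1"
  have est: "c2_normalized (zoom (a i) (b i) (f i))" "c2_normalized (Mob (Nint (zoom (a i) (b i) (f i))))"
    "\<bar>Nint (zoom (a i) (b i) (f i))\<bar> \<le> C1 * (b i - a i)"
    "\<And>x. x \<in> {0..1} \<Longrightarrow>
       \<bar>nonlin (zoom (a i) (b i) (f i)) x - Nint (zoom (a i) (b i) (f i))\<bar> \<le> Ca * (b i - a i) * m powr \<nu>"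
    "\<And>x. x \<in> {0..1} \<Longrightarrow>
       \<bar>nonlin (Mob (Nint (zoom (a i) (b i) (f i)))) x - Nint (zoom (a i) (b i) (f i))\<bar>
         \<le> Ca * (b i - a i) * m powr \<nu>"
    if i: "i \<in> {1..n}" for i
  proof -
    have i1: "i \<ge> 1" using i by simp
    have abi: "0 \<le> a i" "a i < b i" "b i \<le> 1" using ab i by auto
    from zoom_step_estimates[OF nu C0 fC[OF i1] conjunct1[OF fe[OF i1]] conjunct2[OF fe[OF i1]]
        fH[OF i1] fB[OF i1] abi m(1)[OF i] m(3), folded Ca_def]
    show "c2_normalized (zoom (a i) (b i) (f i))" "c2_normalized (Mob (Nint (zoom (a i) (b i) (f i))))"
      "\<bar>Nint (zoom (a i) (b i) (f i))\<bar> \<le> C1 * (b i - a i)"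
      "\<And>x. x \<in> {0..1} \<Longrightarrow>
         \<bar>nonlin (zoom (a i) (b i) (f i)) x - Nint (zoom (a i) (b i) (f i))\<bar> \<le> Ca * (b i - a i) * m powr \<nu>"
      "\<And>x. x \<in> {0..1} \<Longrightarrow>
         \<bar>nonlin (Mob (Nint (zoom (a i) (b i) (f i)))) x - Nint (zoom (a i) (b i) (f i))\<bar>
           \<le> Ca * (b i - a i) * m powr \<nu>"
      by blast+
  qed
  have "0 \<le> b i - a i" if "i \<in> {1..n}" for i using ab that by fastforce
  then have "0 \<le> (\<Sum>i=1..n. b i - a i)" by (rule sum_nonneg)
  moreover have "0 \<le> m powr \<nu>" "m powr \<nu> \<le> 1" using m(2,3) nu by (auto intro: powr_le1)
  ultimately have "m powr \<nu> * (\<Sum>i=1..n. b i - a i) \<le> 1 * C2" using sd by (intro mult_mono) auto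
  moreover have "Ca \<ge> 0" unfolding Ca_def zoom_const_def using C0 by simp
  ultimately have "Ca * (m powr \<nu> * (\<Sum>i=1..n. b i - a i)) \<le> Ca * C2" by (simp add: mult_left_mono)
  moreover have "(\<Sum>i=1..n. Ca * (b i - a i) * m powr \<nu>) = Ca * (m powr \<nu> * (\<Sum>i=1..n. b i - a i))"
    by (simp add: sum_distrib_left mult_ac)
  ultimately have sA: "(\<Sum>i=1..n. Ca * (b i - a i) * m powr \<nu>) \<le> Ca * C2" by simp
  have sB: "(\<Sum>i=1..n. C1 * (b i - a i)) \<le> C1 * C2"
    using sd fB[of 1 0] by (simp add: sum_distrib_left[symmetric] mult_left_mono)
  show ?thesis unfolding Ca_def[symmetric] by unfold_locales (fact est sA sB)+
qed

theorem proposition2p3: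
  fixes \<nu> C0 C1 :: real and f :: "nat \<Rightarrow> real \<Rightarrow> real"
  assumes "\<nu> > 0" and "C0 > 0" and "C1 > 0"
    and "\<And>i. i \<ge> 1 \<Longrightarrow> C2nu_diffeo01 \<nu> (f i)"
    and "\<And>i. i \<ge> 1 \<Longrightarrow> f i 0 = 0 \<and> f i 1 = 1"
    and "\<And>i x y. i \<ge> 1 \<Longrightarrow> x \<in> {0..1} \<Longrightarrow> y \<in> {0..1} \<Longrightarrow>
           \<bar>nonlin (f i) x - nonlin (f i) y\<bar> \<le> C0 * \<bar>x - y\<bar> powr \<nu>"
    and "\<And>i x. i \<ge> 1 \<Longrightarrow> x \<in> {0..1} \<Longrightarrow> \<bar>nonlin (f i) x\<bar> \<le> C1"
  shows "\<forall>C2>0. \<exists>C3>0. \<forall>(n::nat) (a::nat \<Rightarrow> real) (b::nat \<Rightarrow> real).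
           n \<ge> 1 \<longrightarrow>
           (\<forall>i\<in>{1..n}. 0 \<le> a i \<and> a i < b i \<and> b i \<le> 1) \<longrightarrow>
           (\<Sum>i=1..n. b i - a i) \<le> C2 \<longrightarrow>
           dC2 (comp_upto (\<lambda>i. zoom (a i) (b i) (f i)) n)
               (comp_upto (\<lambda>i. Mob (Nint (zoom (a i) (b i) (f i)))) n)
             \<le> C3 * (Max ((\<lambda>j. b j - a j) ` {1..n})) powr \<nu>"
proof (intro allI impI)
  fix C2 :: real assume C2: "C2 > 0"
  define Ca where "Ca = zoom_const C0 C1"
  define K where "K = comparison_const (Ca * C2) (C1 * C2)"
  have Ca: "Ca > 0" unfolding Ca_def zoom_const_def using assms(2) by (simp add: add_pos_nonneg)
  have K: "K \<ge> 0" unfolding K_def using Ca C2 assms(3) by (intro comparison_const_nonneg) auto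
  show "\<exists>C3>0. \<forall>n a b. n \<ge> 1 \<longrightarrow> (\<forall>i\<in>{1..n}. 0 \<le> a i \<and> a i < b i \<and> b i \<le> 1) \<longrightarrow>
      (\<Sum>i=1..n. b i - a i) \<le> C2 \<longrightarrow>
      dC2 (comp_upto (\<lambda>i. zoom (a i) (b i) (f i)) n) (comp_upto (\<lambda>i. Mob (Nint (zoom (a i) (b i) (f i)))) n)
        \<le> C3 * (Max ((\<lambda>j. b j - a j) ` {1..n})) powr \<nu>"
  proof (intro exI[of _ "K * Ca * C2 + 1"] conjI allI impI)
    show "K * Ca * C2 + 1 > 0" using K Ca C2 by (simp add: add_nonneg_pos)
    fix n :: nat and a b :: "nat \<Rightarrow> real"
    assume n: "n \<ge> 1" and ab: "\<forall>i\<in>{1..n}. 0 \<le> a i \<and> a i < b i \<and> b i \<le> 1"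
      and sd: "(\<Sum>i=1..n. b i - a i) \<le> C2"
    define m where "m = Max ((\<lambda>j. b j - a j) ` {1..n})"
    note mesh = interval_mesh[OF n ab, folded m_def]
    interpret nonlin_comparison n "\<lambda>i. zoom (a i) (b i) (f i)" "\<lambda>i. Mob (Nint (zoom (a i) (b i) (f i)))"
      "\<lambda>i. Nint (zoom (a i) (b i) (f i))" "\<lambda>i. Ca * (b i - a i) * m powr \<nu>" "\<lambda>i. C1 * (b i - a i)"
      "Ca * C2" "C1 * C2"
      unfolding Ca_def using assms(2) by (intro zoomed_nonlin_comparison[OF assms(1) _ assms(4-7) ab sd mesh]) simp
    have "(\<Sum>i=1..n. Ca * (b i - a i) * m powr \<nu>) = Ca * m powr \<nu> * (\<Sum>i=1..n. b i - a i)"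
      by (simp add: sum_distrib_left mult_ac)
    with dC2_comp_upto
    have "dC2 (comp_upto (\<lambda>i. zoom (a i) (b i) (f i)) n) (comp_upto (\<lambda>i. Mob (Nint (zoom (a i) (b i) (f i)))) n)
        \<le> K * (Ca * m powr \<nu> * (\<Sum>i=1..n. b i - a i))" unfolding K_def by simp
    also have "\<dots> \<le> K * (Ca * m powr \<nu> * C2)" using sd K Ca by (intro mult_left_mono) auto
    also have "\<dots> \<le> (K * Ca * C2 + 1) * m powr \<nu>" by (simp add: algebra_simps)
    finally show "dC2 (comp_upto (\<lambda>i. zoom (a i) (b i) (f i)) n)
        (comp_upto (\<lambda>i. Mob (Nint (zoom (a i) (b i) (f i)))) n) \<le> (K * Ca * C2 + 1) * m powr \<nu>"
      unfolding m_def .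
  qed
qed

end
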